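(* Let $\beta\in\mathbb{R}$, $b>0$, and let $\Omega\subset\mathbb{R}^{+}$ be measurable. Suppose there is a constant $C$ such that for every $f\in L^2(\mathbb{R}^{+})$ with $\operatorname{supp}f\subset[0,b]$, $\|\Phi_\beta^{*}f\|_{L^2(\mathbb{R}^{+})}\le C\|\Phi_\beta^{*}f\|_{L^2(\Omega)}$. Then $\Omega$ is thick.
   Context: With $\psi_\beta(x,k)=\frac{1}{2i}\frac{\beta+ik}{\beta-ik}e^{ikx}-\frac{1}{2i}e^{-ikx}$, define $(\Phi_\beta^{*}g)(x)=\sqrt{2/\pi}\int_0^\infty\overline{\psi_\beta(x,k)}g(k)dk$ for $g\in L^2(\mathbb{R}^{+})$ (for $g$ compactly supported this integral converges absolutely). A measurable $E\subset\mathbb{R}^{+}$ is thick if there exist $\gamma>0$, $L>0$ with $|E\cap[x,x+L]|\ge\gamma L$ for all $x\in\mathbb{R}^{+}$. *)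

theory Defs
  imports "HOL-Analysis.Analysis"
begin

definition psi :: "real \<Rightarrow> real \<Rightarrow> real \<Rightarrow> complex" where
  "psi \<beta> x k =
     (1 / (2 * \<i>)) * ((complex_of_real \<beta> + \<i> * complex_of_real k) /
                       (complex_of_real \<beta> - \<i> * complex_of_real k)) * exp (\<i> * complex_of_real (k * x))
     - (1 / (2 * \<i>)) * exp (- (\<i> * complex_of_real (k * x)))"

definition Phi_adj :: "real \<Rightarrow> (real \<Rightarrow> complex) \<Rightarrow> real \<Rightarrow> complex" where
  "Phi_adj \<beta> g x =
     complex_of_real (sqrt (2 / pi)) * (LINT k:{0..}|lebesgue. cnj (psi \<beta> x k) * g k)"

definition L2_sq :: "real set \<Rightarrow> (real \<Rightarrow> complex) \<Rightarrow> ennreal" where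
  "L2_sq A h = (\<integral>\<^sup>+ x\<in>A. ennreal ((cmod (h x))\<^sup>2) \<partial>lebesgue)"

definition thick :: "real set \<Rightarrow> bool" where
  "thick E \<longleftrightarrow> (\<exists>\<gamma>>0. \<exists>L>0. \<forall>x\<ge>0. measure lebesgue (E \<inter> {x..x+L}) \<ge> \<gamma> * L)"

end

theory Submission
  imports Defs "HOL-Probability.Characteristic_Functions"
begin

(* If Omega is not thick, then for every R and every gamma > 0 it has density below gamma on
   some window [x0 - R, x0 + R]. Test the inequality with f(k) = (beta + i k) e^(i k x0) on
   [0, b]. The factor beta + i k cancels the denominator of psi_beta, so Phi_beta^* f(x) is a
   constant multiple of J_(-i)(x0 - x) - J_i(x + x0), where J_a(s) = int_0^b (beta + a k) e^(i k s) dk.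
   This function is bounded, has modulus of order b^2 on a fixed neighbourhood of x0 (so its
   L^2 mass is bounded below uniformly in x0), and decays like 1/|x - x0| by integration by
   parts. Its L^2(Omega) mass is therefore at most sup |Phi_beta^* f|^2 * gamma * 2R + O(1/R),
   which contradicts the inequality once R is large and gamma small. *)

definition fourier_affine :: "real \<Rightarrow> real \<Rightarrow> complex \<Rightarrow> real \<Rightarrow> complex" where
  "fourier_affine b \<beta> a s = integral {0..b} (\<lambda>k. (of_real \<beta> + a * of_real k) * iexp (k * s))"

lemma fourier_affine_has_integral:
  "((\<lambda>k. (of_real \<beta> + a * of_real k) * iexp (k * s)) has_integral fourier_affine b \<beta> a s) {0..b}"
  unfolding fourier_affine_def
  by (intro integrable_integral integrable_continuous_interval continuous_intros)

lemma norm_affine_coeff_le: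
  assumes "cmod a \<le> 1" "0 \<le> k" "k \<le> b"
  shows "cmod (of_real \<beta> + a * of_real k) \<le> \<bar>\<beta>\<bar> + b"
proof -
  have "cmod (of_real \<beta> + a * of_real k) \<le> \<bar>\<beta>\<bar> + cmod a * \<bar>k\<bar>"
    by (metis norm_mult norm_of_real norm_triangle_ineq)
  also have "cmod a * \<bar>k\<bar> \<le> 1 * b"
    using assms by (intro mult_mono) auto
  finally show ?thesis by simp
qed

lemma norm_fourier_affine_le:
  assumes "0 \<le> b" "cmod a \<le> 1"
  shows "cmod (fourier_affine b \<beta> a s) \<le> b * (\<bar>\<beta>\<bar> + b)"
proof -
  have "cmod ((of_real \<beta> + a * of_real k) * iexp (k * s)) \<le> \<bar>\<beta>\<bar> + b" if "k \<in> {0..b} - {}" for k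
    using norm_affine_coeff_le[of a k b \<beta>] that assms by (simp add: norm_mult)
  from has_integral_bound_real[OF _ finite.emptyI fourier_affine_has_integral[of \<beta> a s b] this]
  show ?thesis
    using assms by (simp add: mult.commute)
qed

lemma fourier_affine_at_0:
  assumes "0 \<le> b"
  shows "fourier_affine b \<beta> a 0 = of_real (\<beta> * b) + a * of_real (b\<^sup>2 / 2)"
proof -
  have "((\<lambda>k. of_real \<beta> + a * of_real k) has_integral
      (of_real (\<beta> * b) + a * of_real (b\<^sup>2 / 2)) - (of_real (\<beta> * 0) + a * of_real (0\<^sup>2 / 2))) {0..b}"
  proof (rule fundamental_theorem_of_calculus[OF assms])
    fix k
    have "((\<lambda>z. of_real \<beta> * z + a * (z\<^sup>2 / 2)) has_field_derivative of_real \<beta> + a * of_real k)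
        (at (of_real k))"
      by (auto intro!: derivative_eq_intros)
    then show "((\<lambda>k. of_real (\<beta> * k) + a * of_real (k\<^sup>2 / 2)) has_vector_derivative
        of_real \<beta> + a * of_real k) (at k within {0..b})"
      by (auto dest: has_vector_derivative_real_field)
  qed
  then show ?thesis
    using fourier_affine_has_integral[of \<beta> a 0 b] by (auto dest: has_integral_unique)
qed

lemma norm_fourier_affine_diff_at_0_le:
  assumes "0 \<le> b" "cmod a \<le> 1"
  shows "cmod (fourier_affine b \<beta> a s - fourier_affine b \<beta> a 0) \<le> b\<^sup>2 * \<bar>s\<bar> * (\<bar>\<beta>\<bar> + b)"
proof -
  have "cmod ((of_real \<beta> + a * of_real k) * iexp (k * s) - (of_real \<beta> + a * of_real k) * iexp (k * 0))
      \<le> b * \<bar>s\<bar> * (\<bar>\<beta>\<bar> + b)" if k: "k \<in> {0..b} - {}" for k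
  proof -
    have "cmod (iexp (k * s) - 1) \<le> b * \<bar>s\<bar>"
      using iexp_approx1[of "k * s" 0] k by (simp add: abs_mult mult_right_mono order_trans)
    moreover have "cmod (of_real \<beta> + a * of_real k) \<le> \<bar>\<beta>\<bar> + b"
      using k assms by (intro norm_affine_coeff_le) auto
    ultimately have "cmod (of_real \<beta> + a * of_real k) * cmod (iexp (k * s) - 1) \<le> (\<bar>\<beta>\<bar> + b) * (b * \<bar>s\<bar>)"
      using assms by (intro mult_mono) auto
    then show ?thesis
      by (simp add: norm_mult[symmetric] right_diff_distrib mult_ac)
  qed
  from has_integral_bound_real[OF _ finite.emptyI has_integral_diff[OF
        fourier_affine_has_integral[of \<beta> a s b] fourier_affine_has_integral[of \<beta> a 0 b]] this]
  show ?thesis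
    using assms by (simp add: power2_eq_square mult_ac)
qed

lemma norm_fourier_affine_decay:
  assumes "0 \<le> b" "cmod a \<le> 1" "1 \<le> \<bar>s\<bar>"
  shows "cmod (fourier_affine b \<beta> a s) \<le> (2 * \<bar>\<beta>\<bar> + b + 2) / \<bar>s\<bar>"
proof -
  define G where "G z = (of_real \<beta> + a * z) * exp (\<i> * z * of_real s) / (\<i> * of_real s)
       + a * exp (\<i> * z * of_real s) / (of_real s)\<^sup>2" for z
  have "s \<noteq> 0" using assms by auto
  then have G': "(G has_field_derivative (of_real \<beta> + a * z) * exp (\<i> * z * of_real s)) (at z)" for z
    unfolding G_def by (auto intro!: derivative_eq_intros simp: field_simps power2_eq_square)
  have "((\<lambda>k. (of_real \<beta> + a * of_real k) * iexp (k * s)) has_integral G (of_real b) - G (of_real 0)) {0..b}"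
  proof (rule fundamental_theorem_of_calculus[OF assms(1)])
    fix k
    show "((\<lambda>k. G (of_real k)) has_vector_derivative (of_real \<beta> + a * of_real k) * iexp (k * s))
        (at k within {0..b})"
      using has_vector_derivative_real_field[OF G'[of "of_real k"]] by (simp add: mult.assoc)
  qed
  then have integral_eq: "fourier_affine b \<beta> a s = G (of_real b) - G 0"
    using fourier_affine_has_integral by (metis has_integral_unique of_real_0)
  have s_sq: "cmod a / \<bar>s\<bar>\<^sup>2 \<le> 1 / \<bar>s\<bar>"
  proof (rule frac_le)
    show "\<bar>s\<bar> \<le> \<bar>s\<bar>\<^sup>2"
      using mult_left_mono[of 1 "\<bar>s\<bar>" "\<bar>s\<bar>"] assms by (simp add: power2_eq_square)
  qed (use assms in auto)
  have "cmod (exp (\<i> * of_real b * of_real s)) = 1"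
    by (metis norm_exp_i_times of_real_mult mult.assoc)
  then have "cmod (G (of_real b)) \<le> cmod (of_real \<beta> + a * of_real b) / \<bar>s\<bar> + cmod a / \<bar>s\<bar>\<^sup>2"
    unfolding G_def
    by (intro order_trans[OF norm_triangle_ineq] eq_refl) (simp add: norm_mult norm_divide norm_power)
  also have "\<dots> \<le> (\<bar>\<beta>\<bar> + b) / \<bar>s\<bar> + 1 / \<bar>s\<bar>"
    using assms s_sq by (intro add_mono divide_right_mono norm_affine_coeff_le) auto
  finally have G_b: "cmod (G (of_real b)) \<le> (\<bar>\<beta>\<bar> + b) / \<bar>s\<bar> + 1 / \<bar>s\<bar>" .
  have "cmod (G 0) \<le> \<bar>\<beta>\<bar> / \<bar>s\<bar> + cmod a / \<bar>s\<bar>\<^sup>2"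
    unfolding G_def
    by (intro order_trans[OF norm_triangle_ineq] eq_refl) (simp add: norm_mult norm_divide norm_power)
  also have "\<dots> \<le> \<bar>\<beta>\<bar> / \<bar>s\<bar> + 1 / \<bar>s\<bar>"
    using s_sq by simp
  finally have G_0: "cmod (G 0) \<le> \<bar>\<beta>\<bar> / \<bar>s\<bar> + 1 / \<bar>s\<bar>" .
  have "cmod (fourier_affine b \<beta> a s) \<le> (\<bar>\<beta>\<bar> + b) / \<bar>s\<bar> + 1 / \<bar>s\<bar> + (\<bar>\<beta>\<bar> / \<bar>s\<bar> + 1 / \<bar>s\<bar>)"
    unfolding integral_eq by (rule order_trans[OF norm_triangle_ineq4 add_mono[OF G_b G_0]])
  also have "\<dots> = (2 * \<bar>\<beta>\<bar> + b + 2) / \<bar>s\<bar>"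
    by (simp add: add_divide_distrib)
  finally show ?thesis .
qed

lemma cnj_psi:
  "cnj (psi \<beta> x k) = (\<i>/2) * ((of_real \<beta> - \<i> * of_real k) / (of_real \<beta> + \<i> * of_real k)) * iexp (- (k * x))
      - (\<i>/2) * iexp (k * x)"
proof -
  have "cnj (1 / (2 * \<i>)) = \<i> / 2"
    by (simp add: complex_eq_iff)
  then show ?thesis
    by (simp add: psi_def exp_cnj complex_cnj_divide)
qed

lemma cnj_psi_mult_wave:
  "cnj (psi \<beta> x k) * ((of_real \<beta> + \<i> * of_real k) * iexp (k * x0))
   = (\<i>/2) * ((of_real \<beta> + (-\<i>) * of_real k) * iexp (k * (x0 - x))
       - (of_real \<beta> + \<i> * of_real k) * iexp (k * (x + x0)))"
proof -
  have quotient: "(of_real \<beta> - \<i> * of_real k) / (of_real \<beta> + \<i> * of_real k) * (of_real \<beta> + \<i> * of_real k)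
      = of_real \<beta> - \<i> * of_real k"
    by (cases "\<beta> = 0 \<and> k = 0") (auto simp: complex_eq_iff)
  have exps: "iexp (- (k * x)) * iexp (k * x0) = iexp (k * (x0 - x))"
       "iexp (k * x) * iexp (k * x0) = iexp (k * (x + x0))"
    unfolding mult_exp_exp by (simp_all add: algebra_simps)
  have "cnj (psi \<beta> x k) * ((of_real \<beta> + \<i> * of_real k) * iexp (k * x0))
      = (\<i>/2) * ((of_real \<beta> - \<i> * of_real k) / (of_real \<beta> + \<i> * of_real k) * (of_real \<beta> + \<i> * of_real k))
          * (iexp (- (k * x)) * iexp (k * x0))
        - (\<i>/2) * (of_real \<beta> + \<i> * of_real k) * (iexp (k * x) * iexp (k * x0))"
    unfolding cnj_psi by (simp add: algebra_simps)
  then show ?thesis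
    unfolding quotient exps by (simp add: algebra_simps)
qed

definition probe :: "real \<Rightarrow> real \<Rightarrow> real \<Rightarrow> real \<Rightarrow> complex" where
  "probe \<beta> b x0 k = indicator {0..b} k *\<^sub>R ((of_real \<beta> + \<i> * of_real k) * iexp (k * x0))"

lemma probe_measurable: "probe \<beta> b x0 \<in> borel_measurable lebesgue"
  unfolding probe_def by (rule measurable_completion) simp

lemma probe_eq_0: "k \<notin> {0..b} \<Longrightarrow> probe \<beta> b x0 k = 0"
  by (simp add: probe_def)

lemma L2_sq_probe_finite:
  assumes "0 \<le> b"
  shows "L2_sq {0..} (probe \<beta> b x0) < \<infinity>"
proof -
  have "L2_sq {0..} (probe \<beta> b x0) \<le> (\<integral>\<^sup>+k. ennreal ((\<bar>\<beta>\<bar> + b)\<^sup>2) * indicator {0..b} k \<partial>lebesgue)"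
    unfolding L2_sq_def
  proof (intro nn_integral_mono)
    fix k
    have "cmod (probe \<beta> b x0 k) \<le> \<bar>\<beta>\<bar> + b" if "k \<in> {0..b}"
      using norm_affine_coeff_le[of \<i> k b \<beta>] that by (simp add: probe_def norm_mult)
    then show "ennreal ((cmod (probe \<beta> b x0 k))\<^sup>2) * indicator {0..} k
        \<le> ennreal ((\<bar>\<beta>\<bar> + b)\<^sup>2) * indicator {0..b} k"
      by (cases "k \<in> {0..b}") (auto simp: probe_eq_0 indicator_def intro!: ennreal_leI power_mono)
  qed
  also have "\<dots> < \<infinity>"
    using assms by (simp add: nn_integral_cmult_indicator ennreal_mult_less_top)
  finally show ?thesis .
qed

lemma Phi_adj_probe:
  assumes "0 \<le> b"
  shows "Phi_adj \<beta> (probe \<beta> b x0) x = of_real (sqrt (2 / pi)) * (\<i> / 2) *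
    (fourier_affine b \<beta> (-\<i>) (x0 - x) - fourier_affine b \<beta> \<i> (x + x0))"
proof -
  define h where "h k = (\<i>/2) * ((of_real \<beta> + (-\<i>) * of_real k) * iexp (k * (x0 - x))
       - (of_real \<beta> + \<i> * of_real k) * iexp (k * (x + x0)))" for k
  have h_integral: "(h has_integral (\<i> / 2) *
      (fourier_affine b \<beta> (-\<i>) (x0 - x) - fourier_affine b \<beta> \<i> (x + x0))) {0..b}"
    unfolding h_def by (intro has_integral_mult_right has_integral_diff fourier_affine_has_integral)
  have "set_integrable lborel {0..b} h"
    unfolding h_def by (intro borel_integrable_atLeastAtMost' continuous_intros)
  then have "set_integrable lebesgue {0..b} h"
    unfolding set_integrable_def by (simp add: integrable_completion)
  then have "(h has_integral (LINT k:{0..b}|lebesgue. h k)) {0..b}"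
    by (rule has_integral_set_lebesgue)
  then have integral_h: "(LINT k:{0..b}|lebesgue. h k) = (\<i> / 2) *
      (fourier_affine b \<beta> (-\<i>) (x0 - x) - fourier_affine b \<beta> \<i> (x + x0))"
    using h_integral by (rule has_integral_unique)
  have "indicator {0..} k *\<^sub>R (cnj (psi \<beta> x k) * probe \<beta> b x0 k) = indicator {0..b} k *\<^sub>R h k" for k
  proof (cases "k \<in> {0..b}")
    case True
    then have "indicator {0..} k = (1::real)" "indicator {0..b} k = (1::real)"
      by auto
    then show ?thesis
      unfolding probe_def h_def by (simp only: scaleR_one cnj_psi_mult_wave)
  qed (simp add: probe_def)
  then have "(LINT k:{0..}|lebesgue. cnj (psi \<beta> x k) * probe \<beta> b x0 k) = (LINT k:{0..b}|lebesgue. h k)"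
    unfolding set_lebesgue_integral_def by presburger
  then show ?thesis
    unfolding Phi_adj_def integral_h by (simp only: mult.assoc)
qed

lemma norm_Phi_adj_probe:
  "0 \<le> b \<Longrightarrow> cmod (Phi_adj \<beta> (probe \<beta> b x0) x) =
    sqrt (2 / pi) / 2 * cmod (fourier_affine b \<beta> (-\<i>) (x0 - x) - fourier_affine b \<beta> \<i> (x + x0))"
  by (simp add: Phi_adj_probe norm_mult)

lemma sqrt_2_div_pi_le_1: "sqrt (2 / pi) \<le> 1"
  using pi_gt3 by simp

lemma norm_Phi_adj_probe_le:
  assumes "0 \<le> b"
  shows "cmod (Phi_adj \<beta> (probe \<beta> b x0) x) \<le> b * (\<bar>\<beta>\<bar> + b)"
proof -
  have "cmod (fourier_affine b \<beta> (-\<i>) (x0 - x) - fourier_affine b \<beta> \<i> (x + x0))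
      \<le> cmod (fourier_affine b \<beta> (-\<i>) (x0 - x)) + cmod (fourier_affine b \<beta> \<i> (x + x0))"
    by (rule norm_triangle_ineq4)
  also have "\<dots> \<le> b * (\<bar>\<beta>\<bar> + b) + b * (\<bar>\<beta>\<bar> + b)"
    by (intro add_mono norm_fourier_affine_le[OF assms]) simp_all
  also have "\<dots> = 2 * (b * (\<bar>\<beta>\<bar> + b))"
    by (rule mult_2[symmetric])
  finally have "cmod (Phi_adj \<beta> (probe \<beta> b x0) x) \<le> 1 / 2 * (2 * (b * (\<bar>\<beta>\<bar> + b)))"
    unfolding norm_Phi_adj_probe[OF assms] using sqrt_2_div_pi_le_1 by (intro mult_mono) auto
  then show ?thesis
    by simp
qed

lemma norm_Phi_adj_probe_decay:
  assumes "0 \<le> b" "0 \<le> x" "0 \<le> x0" "1 \<le> \<bar>x - x0\<bar>"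
  shows "cmod (Phi_adj \<beta> (probe \<beta> b x0) x) \<le> (2 * \<bar>\<beta>\<bar> + b + 2) / \<bar>x - x0\<bar>"
proof -
  define K where "K = 2 * \<bar>\<beta>\<bar> + b + 2"
  have "0 \<le> K"
    using assms(1) by (simp add: K_def)
  have closer: "\<bar>x - x0\<bar> \<le> \<bar>x + x0\<bar>"
    using assms(2,3) by (cases "x \<le> x0") auto
  have "cmod (fourier_affine b \<beta> (-\<i>) (x0 - x)) \<le> K / \<bar>x - x0\<bar>"
    using norm_fourier_affine_decay[of b "-\<i>" "x0 - x" \<beta>] assms(1,4)
    unfolding K_def by (simp add: abs_minus_commute)
  moreover have "cmod (fourier_affine b \<beta> \<i> (x + x0)) \<le> K / \<bar>x + x0\<bar>"
    using norm_fourier_affine_decay[of b \<i> "x + x0" \<beta>] assms(1) order_trans[OF assms(4) closer]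
    unfolding K_def by simp
  moreover have "K / \<bar>x + x0\<bar> \<le> K / \<bar>x - x0\<bar>"
    using \<open>0 \<le> K\<close> closer assms(4) by (intro divide_left_mono mult_pos_pos) auto
  moreover have "cmod (fourier_affine b \<beta> (-\<i>) (x0 - x) - fourier_affine b \<beta> \<i> (x + x0))
      \<le> cmod (fourier_affine b \<beta> (-\<i>) (x0 - x)) + cmod (fourier_affine b \<beta> \<i> (x + x0))"
    by (rule norm_triangle_ineq4)
  ultimately have "cmod (fourier_affine b \<beta> (-\<i>) (x0 - x) - fourier_affine b \<beta> \<i> (x + x0))
      \<le> 2 * (K / \<bar>x - x0\<bar>)"
    by linarith
  then have "cmod (Phi_adj \<beta> (probe \<beta> b x0) x) \<le> 1 / 2 * (2 * (K / \<bar>x - x0\<bar>))"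
    unfolding norm_Phi_adj_probe[OF assms(1)] using sqrt_2_div_pi_le_1 by (intro mult_mono) auto
  then show ?thesis
    unfolding K_def by linarith
qed

text \<open>Near \<open>x0\<close> the first integral stays close to its value at \<open>s = 0\<close>, whose imaginary
  part is \<open>-b\<^sup>2/2\<close>, while the second one has already decayed since \<open>x + x0\<close> is large.\<close>
lemma norm_Phi_adj_probe_ge:
  assumes "0 < b" "0 \<le> x" "\<bar>x - x0\<bar> * (\<bar>\<beta>\<bar> + b) \<le> 1 / 4" "1 \<le> x0"
    and "8 * (2 * \<bar>\<beta>\<bar> + b + 2) \<le> b\<^sup>2 * x0"
  shows "sqrt (2 / pi) * b\<^sup>2 / 16 \<le> cmod (Phi_adj \<beta> (probe \<beta> b x0) x)"
proof -
  have "Im (fourier_affine b \<beta> (-\<i>) 0) = - (b\<^sup>2 / 2)"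
    using assms(1) by (simp add: fourier_affine_at_0)
  then have "b\<^sup>2 / 2 \<le> cmod (fourier_affine b \<beta> (-\<i>) 0)"
    using abs_Im_le_cmod[of "fourier_affine b \<beta> (-\<i>) 0"] by simp
  moreover have "cmod (fourier_affine b \<beta> (-\<i>) (x0 - x) - fourier_affine b \<beta> (-\<i>) 0)
      \<le> b\<^sup>2 * (\<bar>x - x0\<bar> * (\<bar>\<beta>\<bar> + b))"
    using norm_fourier_affine_diff_at_0_le[of b "-\<i>" \<beta> "x0 - x"] assms(1)
    by (simp add: abs_minus_commute mult.assoc)
  moreover have "b\<^sup>2 * (\<bar>x - x0\<bar> * (\<bar>\<beta>\<bar> + b)) \<le> b\<^sup>2 * (1 / 4)"
    using assms(3) by (intro mult_left_mono) auto
  moreover have "cmod (fourier_affine b \<beta> (-\<i>) 0) - cmod (fourier_affine b \<beta> (-\<i>) (x0 - x))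
      \<le> cmod (fourier_affine b \<beta> (-\<i>) (x0 - x) - fourier_affine b \<beta> (-\<i>) 0)"
    by (metis norm_minus_commute norm_triangle_ineq2)
  ultimately have near: "b\<^sup>2 / 4 \<le> cmod (fourier_affine b \<beta> (-\<i>) (x0 - x))"
    by linarith
  have "cmod (fourier_affine b \<beta> \<i> (x + x0)) \<le> (2 * \<bar>\<beta>\<bar> + b + 2) / (x + x0)"
    using norm_fourier_affine_decay[of b \<i> "x + x0" \<beta>] assms(1,2,4) by simp
  also have "\<dots> \<le> (2 * \<bar>\<beta>\<bar> + b + 2) / x0"
    using assms(1,2,4) by (intro divide_left_mono mult_pos_pos) auto
  also have "\<dots> \<le> b\<^sup>2 / 8"
    using assms(4,5) by (simp add: pos_divide_le_eq)
  finally have far: "cmod (fourier_affine b \<beta> \<i> (x + x0)) \<le> b\<^sup>2 / 8" .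
  have "b\<^sup>2 / 8 \<le> cmod (fourier_affine b \<beta> (-\<i>) (x0 - x) - fourier_affine b \<beta> \<i> (x + x0))"
    using near far norm_triangle_ineq2[of "fourier_affine b \<beta> (-\<i>) (x0 - x)" "fourier_affine b \<beta> \<i> (x + x0)"]
    by linarith
  then have "sqrt (2 / pi) / 2 * (b\<^sup>2 / 8) \<le> cmod (Phi_adj \<beta> (probe \<beta> b x0) x)"
    unfolding norm_Phi_adj_probe[OF less_imp_le[OF assms(1)]] by (rule mult_left_mono) simp
  then show ?thesis
    by simp
qed

lemma nn_integral_inverse_square_right_tail:
  fixes A R x0 :: real
  assumes "0 \<le> A" "0 < R"
  shows "(\<integral>\<^sup>+x. ennreal (A / (x - x0)\<^sup>2) * indicator {x0+R..} x \<partial>lebesgue) = ennreal (A / R)"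
proof -
  have "(\<integral>\<^sup>+x. ennreal (A / (x - x0)\<^sup>2) * indicator {x0+R..} x \<partial>lebesgue)
      = (\<integral>\<^sup>+x. ennreal (A / (x - x0)\<^sup>2) * indicator {x0+R..} x \<partial>lborel)"
    by (rule nn_integral_completion)
  also have "\<dots> = 0 - (- A / ((x0 + R) - x0))"
  proof (rule nn_integral_FTC_atLeast)
    fix x assume "x0 + R \<le> x"
    then have "x - x0 \<noteq> 0" using assms by auto
    then show "((\<lambda>x. - A / (x - x0)) has_real_derivative A / (x - x0)\<^sup>2) (at x)"
      by (auto intro!: derivative_eq_intros simp: field_simps power2_eq_square)
  next
    have "filterlim (\<lambda>x. x - x0) at_top at_top"
      using filterlim_tendsto_add_at_top[OF tendsto_const[of "- x0"] filterlim_ident] by simp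
    then show "((\<lambda>x. - A / (x - x0)) \<longlongrightarrow> 0) at_top"
      by (intro tendsto_divide_0[OF tendsto_const] filterlim_at_top_imp_at_infinity)
  qed (use assms in auto)
  finally show ?thesis
    by simp
qed

lemma nn_integral_inverse_square_left_tail:
  fixes A R x0 :: real
  assumes "0 \<le> A" "0 < R" "R \<le> x0"
  shows "(\<integral>\<^sup>+x. ennreal (A / (x - x0)\<^sup>2) * indicator {0..x0-R} x \<partial>lebesgue) \<le> ennreal (A / R)"
proof -
  have "(\<integral>\<^sup>+x. ennreal (A / (x - x0)\<^sup>2) * indicator {0..x0-R} x \<partial>lebesgue)
      = (\<integral>\<^sup>+x. ennreal (A / (x - x0)\<^sup>2) * indicator {0..x0-R} x \<partial>lborel)"
    by (rule nn_integral_completion)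
  also have "\<dots> = ennreal (A / (x0 - (x0 - R)) - A / (x0 - 0))"
  proof (rule nn_integral_has_integral_lebesgue')
    show "((\<lambda>x. A / (x - x0)\<^sup>2) has_integral A / (x0 - (x0 - R)) - A / (x0 - 0)) {0..x0 - R}"
    proof (rule fundamental_theorem_of_calculus)
      fix x assume "x \<in> {0..x0 - R}"
      then have "x0 - x \<noteq> 0" using assms by auto
      then have "((\<lambda>x. A / (x0 - x)) has_real_derivative A / (x - x0)\<^sup>2) (at x)"
        by (auto intro!: derivative_eq_intros simp: field_simps power2_eq_square)
      then show "((\<lambda>x. A / (x0 - x)) has_vector_derivative A / (x - x0)\<^sup>2) (at x within {0..x0 - R})"
        by (simp add: has_real_derivative_iff_has_vector_derivative has_vector_derivative_at_within)
    qed (use assms in simp)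
  qed (use assms in simp)
  also have "\<dots> \<le> ennreal (A / R)"
    using assms by (intro ennreal_leI) simp
  finally show ?thesis .
qed

lemma L2_sq_ge_interval:
  assumes "u \<le> v" "{u..v} \<subseteq> A" "0 \<le> c" "\<And>x. x \<in> {u..v} \<Longrightarrow> c \<le> cmod (g x)"
  shows "ennreal (c\<^sup>2 * (v - u)) \<le> L2_sq A g"
proof -
  have "ennreal (c\<^sup>2 * (v - u)) = (\<integral>\<^sup>+x. ennreal (c\<^sup>2) * indicator {u..v} x \<partial>lebesgue)"
    using assms(1) by (simp add: nn_integral_cmult_indicator ennreal_mult)
  also have "\<dots> \<le> L2_sq A g"
    unfolding L2_sq_def using assms
    by (intro nn_integral_mono) (auto simp: indicator_def intro!: ennreal_leI power_mono)
  finally show ?thesis .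
qed

lemma sq_norm_indicator_le_near_plus_tails:
  assumes "\<Omega> \<subseteq> {0..}" "0 < R"
    and bounded: "cmod (g x) \<le> M"
    and decay: "0 \<le> x \<Longrightarrow> R \<le> \<bar>x - x0\<bar> \<Longrightarrow> cmod (g x) \<le> K / \<bar>x - x0\<bar>"
  shows "ennreal ((cmod (g x))\<^sup>2) * indicator \<Omega> x
      \<le> ennreal (M\<^sup>2) * indicator (\<Omega> \<inter> {x0-R..x0+R}) x
        + (ennreal (K\<^sup>2 / (x - x0)\<^sup>2) * indicator {x0+R..} x
          + ennreal (K\<^sup>2 / (x - x0)\<^sup>2) * indicator {0..x0-R} x)"
proof (cases "x \<in> \<Omega>")
  case True
  then have "0 \<le> x" using assms(1) by auto
  show ?thesis
  proof (cases "\<bar>x - x0\<bar> \<le> R")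
    case True
    then have "x \<in> \<Omega> \<inter> {x0-R..x0+R}"
      using \<open>x \<in> \<Omega>\<close> by auto
    moreover have "(cmod (g x))\<^sup>2 \<le> M\<^sup>2"
      using bounded by (intro power_mono) auto
    ultimately show ?thesis
      using \<open>x \<in> \<Omega>\<close> by (auto intro!: ennreal_leI add_increasing2)
  next
    case False
    then have "cmod (g x) \<le> K / \<bar>x - x0\<bar>"
      using decay \<open>0 \<le> x\<close> by simp
    then have "(cmod (g x))\<^sup>2 \<le> (K / \<bar>x - x0\<bar>)\<^sup>2"
      by (intro power_mono) auto
    then have "ennreal ((cmod (g x))\<^sup>2) \<le> ennreal (K\<^sup>2 / (x - x0)\<^sup>2)"
      by (intro ennreal_leI) (simp add: power_divide)
    also have "\<dots> \<le> ennreal (K\<^sup>2 / (x - x0)\<^sup>2) * indicator {x0+R..} x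
        + ennreal (K\<^sup>2 / (x - x0)\<^sup>2) * indicator {0..x0-R} x"
      using False \<open>0 \<le> x\<close> \<open>0 < R\<close> by (auto simp: indicator_def)
    finally show ?thesis
      using \<open>x \<in> \<Omega>\<close> by (auto intro: add_increasing)
  qed
qed simp

lemma L2_sq_le_near_plus_tails:
  assumes "\<Omega> \<in> sets lebesgue" "\<Omega> \<subseteq> {0..}" "0 < R" "R \<le> x0"
    and bounded: "\<And>x. cmod (g x) \<le> M"
    and decay: "\<And>x. 0 \<le> x \<Longrightarrow> R \<le> \<bar>x - x0\<bar> \<Longrightarrow> cmod (g x) \<le> K / \<bar>x - x0\<bar>"
  shows "L2_sq \<Omega> g \<le> ennreal (M\<^sup>2 * measure lebesgue (\<Omega> \<inter> {x0-R..x0+R}) + 2 * (K\<^sup>2 / R))"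
proof -
  define S where "S = \<Omega> \<inter> {x0-R..x0+R}"
  define tail where "tail x = ennreal (K\<^sup>2 / (x - x0)\<^sup>2)" for x
  have S_sets: "S \<in> sets lebesgue"
    unfolding S_def using assms(1) by auto
  have "emeasure lebesgue S \<le> emeasure lebesgue {x0-R..x0+R}"
    unfolding S_def by (rule emeasure_mono) auto
  also have "\<dots> < \<infinity>"
    using assms(3) by simp
  finally have S_finite: "emeasure lebesgue S \<noteq> top"
    by simp
  have tail_measurable: "(\<lambda>x. tail x * indicator I x) \<in> borel_measurable lebesgue"
    if "I \<in> sets borel" for I
    unfolding tail_def using that by (intro measurable_completion) simp
  have "L2_sq \<Omega> g \<le> (\<integral>\<^sup>+x. ennreal (M\<^sup>2) * indicator S x
      + (tail x * indicator {x0+R..} x + tail x * indicator {0..x0-R} x) \<partial>lebesgue)"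
    unfolding L2_sq_def S_def tail_def using assms(2,3) bounded decay
    by (intro nn_integral_mono sq_norm_indicator_le_near_plus_tails)
  also have "\<dots> = ennreal (M\<^sup>2) * emeasure lebesgue S
      + ((\<integral>\<^sup>+x. tail x * indicator {x0+R..} x \<partial>lebesgue) + (\<integral>\<^sup>+x. tail x * indicator {0..x0-R} x \<partial>lebesgue))"
    using S_sets tail_measurable[of "{x0+R..}"] tail_measurable[of "{0..x0-R}"]
    by (simp add: nn_integral_add nn_integral_cmult_indicator)
  also have "\<dots> \<le> ennreal (M\<^sup>2) * emeasure lebesgue S + (ennreal (K\<^sup>2 / R) + ennreal (K\<^sup>2 / R))"
    unfolding tail_def using assms(3,4)
    by (intro add_mono order.refl nn_integral_inverse_square_left_tail)
       (simp_all add: nn_integral_inverse_square_right_tail)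
  also have "\<dots> = ennreal (M\<^sup>2 * measure lebesgue S + (K\<^sup>2 / R + K\<^sup>2 / R))"
  proof -
    have t: "0 \<le> K\<^sup>2 / R"
      using assms(3) by simp
    have "ennreal (M\<^sup>2 * measure lebesgue S + (K\<^sup>2 / R + K\<^sup>2 / R))
        = ennreal (M\<^sup>2 * measure lebesgue S) + ennreal (K\<^sup>2 / R + K\<^sup>2 / R)"
      using t by (intro ennreal_plus) auto
    also have "\<dots> = ennreal (M\<^sup>2) * emeasure lebesgue S + (ennreal (K\<^sup>2 / R) + ennreal (K\<^sup>2 / R))"
      unfolding emeasure_eq_ennreal_measure[OF S_finite] ennreal_plus[OF t t] by (simp add: ennreal_mult')
    finally show ?thesis
      by (rule sym)
  qed
  finally show ?thesis
    unfolding S_def mult_2 .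
qed

lemma mass_le_near_plus_tails:
  assumes "\<Omega> \<in> sets lebesgue" "\<Omega> \<subseteq> {0..}" "0 \<le> c" "1 \<le> R" "R \<le> x0"
    and observable: "L2_sq {0..} g \<le> ennreal c * L2_sq \<Omega> g"
    and mass: "ennreal m \<le> L2_sq {0..} g"
    and bounded: "\<And>x. cmod (g x) \<le> M"
    and decay: "\<And>x. 0 \<le> x \<Longrightarrow> 1 \<le> \<bar>x - x0\<bar> \<Longrightarrow> cmod (g x) \<le> K / \<bar>x - x0\<bar>"
  shows "m \<le> c * (M\<^sup>2 * measure lebesgue (\<Omega> \<inter> {x0-R..x0+R}) + 2 * (K\<^sup>2 / R))"
proof -
  define U where "U = M\<^sup>2 * measure lebesgue (\<Omega> \<inter> {x0-R..x0+R}) + 2 * (K\<^sup>2 / R)"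
  have "0 \<le> U"
    using assms(4) by (simp add: U_def)
  have "L2_sq \<Omega> g \<le> ennreal U"
    unfolding U_def using assms(1-5) bounded decay by (intro L2_sq_le_near_plus_tails) auto
  then have "ennreal m \<le> ennreal c * ennreal U"
    using mass observable by (meson order_trans mult_left_mono zero_le)
  then show ?thesis
    using \<open>0 \<le> c\<close> \<open>0 \<le> U\<close> unfolding U_def[symmetric] by (simp add: ennreal_mult'[symmetric])
qed

lemma thick_if_observable_family:
  fixes h :: "real \<Rightarrow> real \<Rightarrow> complex"
  assumes "\<Omega> \<in> sets lebesgue" "\<Omega> \<subseteq> {0..}" "0 \<le> c" "0 < m"
    and observable: "\<And>x0. X \<le> x0 \<Longrightarrow> L2_sq {0..} (h x0) \<le> ennreal c * L2_sq \<Omega> (h x0)"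
    and mass: "\<And>x0. X \<le> x0 \<Longrightarrow> ennreal m \<le> L2_sq {0..} (h x0)"
    and bounded: "\<And>x0 x. X \<le> x0 \<Longrightarrow> cmod (h x0 x) \<le> M"
    and decay: "\<And>x0 x. X \<le> x0 \<Longrightarrow> 0 \<le> x \<Longrightarrow> 1 \<le> \<bar>x - x0\<bar> \<Longrightarrow> cmod (h x0 x) \<le> K / \<bar>x - x0\<bar>"
  shows "thick \<Omega>"
proof (rule ccontr)
  assume "\<not> thick \<Omega>"
  define R where "R = max (max 1 X) (8 * c * K\<^sup>2 / m)"
  define P where "P = c * M\<^sup>2 * R"
  define \<gamma> where "\<gamma> = m / (8 * (P + 1))"
  have R: "1 \<le> R" "X \<le> R" "8 * c * K\<^sup>2 / m \<le> R"
    unfolding R_def by auto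
  then have tails_small: "c * (2 * (K\<^sup>2 / R)) \<le> m / 4"
    using \<open>0 < m\<close> by (simp add: field_simps)
  have "0 \<le> P"
    using R \<open>0 \<le> c\<close> by (simp add: P_def)
  then have "0 < \<gamma>"
    using \<open>0 < m\<close> by (simp add: \<gamma>_def)
  have "c * M\<^sup>2 * (\<gamma> * (2 * R)) = m / 4 * (P / (P + 1))"
    using \<open>0 \<le> P\<close> by (simp add: \<gamma>_def P_def field_simps)
  also have "\<dots> \<le> m / 4"
    using \<open>0 \<le> P\<close> \<open>0 < m\<close> by (intro mult_left_le) (auto simp: divide_le_eq)
  finally have near_small: "c * M\<^sup>2 * (\<gamma> * (2 * R)) \<le> m / 4" .
  have "\<exists>x1\<ge>0. measure lebesgue (\<Omega> \<inter> {x1..x1 + 2 * R}) < \<gamma> * (2 * R)"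
    using \<open>\<not> thick \<Omega>\<close> \<open>0 < \<gamma>\<close> R(1) unfolding thick_def by (auto simp: not_le)
  then obtain x1 where "0 \<le> x1" and sparse: "measure lebesgue (\<Omega> \<inter> {x1..x1 + 2 * R}) < \<gamma> * (2 * R)"
    by blast
  define x0 where "x0 = x1 + R"
  have window: "{x0-R..x0+R} = {x1..x1 + 2 * R}"
    by (simp add: x0_def)
  have "X \<le> x0" "R \<le> x0"
    using R \<open>0 \<le> x1\<close> by (simp_all add: x0_def)
  then have "m \<le> c * (M\<^sup>2 * measure lebesgue (\<Omega> \<inter> {x1..x1 + 2 * R}) + 2 * (K\<^sup>2 / R))"
    unfolding window[symmetric] using assms(1-3) R(1)
    by (intro mass_le_near_plus_tails[where g = "h x0"] observable mass bounded decay)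
  also have "\<dots> \<le> c * M\<^sup>2 * (\<gamma> * (2 * R)) + c * (2 * (K\<^sup>2 / R))"
    using sparse \<open>0 \<le> c\<close> by (simp add: distrib_left mult.assoc mult_left_mono)
  also have "\<dots> \<le> m / 4 + m / 4"
    using near_small tails_small by (rule add_mono)
  finally show False
    using \<open>0 < m\<close> by simp
qed

lemma L2_sq_Phi_adj_probe_ge:
  assumes "0 < b" "0 < \<delta>" "\<delta> * (\<bar>\<beta>\<bar> + b) \<le> 1 / 4" "\<delta> \<le> x0" "1 \<le> x0"
    and "8 * (2 * \<bar>\<beta>\<bar> + b + 2) \<le> b\<^sup>2 * x0"
  shows "ennreal ((sqrt (2 / pi) * b\<^sup>2 / 16)\<^sup>2 * (2 * \<delta>)) \<le> L2_sq {0..} (Phi_adj \<beta> (probe \<beta> b x0))"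
proof -
  have "ennreal ((sqrt (2 / pi) * b\<^sup>2 / 16)\<^sup>2 * ((x0 + \<delta>) - (x0 - \<delta>)))
      \<le> L2_sq {0..} (Phi_adj \<beta> (probe \<beta> b x0))"
  proof (rule L2_sq_ge_interval)
    fix x assume x: "x \<in> {x0 - \<delta>..x0 + \<delta>}"
    then have "\<bar>x - x0\<bar> * (\<bar>\<beta>\<bar> + b) \<le> \<delta> * (\<bar>\<beta>\<bar> + b)"
      using assms(1) by (intro mult_right_mono) auto
    then show "sqrt (2 / pi) * b\<^sup>2 / 16 \<le> cmod (Phi_adj \<beta> (probe \<beta> b x0) x)"
      using x assms by (intro norm_Phi_adj_probe_ge) auto
  qed (use assms(2,4) in auto)
  then show ?thesis
    by simp
qed

theorem lemma3p4:
  fixes \<beta> b :: real and \<Omega> :: "real set"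
  assumes "b > 0"
    and "\<Omega> \<in> sets lebesgue" and "\<Omega> \<subseteq> {0..}"
    and "\<exists>C::real. \<forall>f :: real \<Rightarrow> complex.
           f \<in> borel_measurable lebesgue \<longrightarrow>
           L2_sq {0..} f < \<infinity> \<longrightarrow>
           (\<forall>k. k \<notin> {0..b} \<longrightarrow> f k = 0) \<longrightarrow>
           L2_sq {0..} (Phi_adj \<beta> f) \<le> ennreal (C\<^sup>2) * L2_sq \<Omega> (Phi_adj \<beta> f)"
  shows "thick \<Omega>"
proof -
  from assms(4) obtain C :: real where observable: "\<forall>f :: real \<Rightarrow> complex.
           f \<in> borel_measurable lebesgue \<longrightarrow> L2_sq {0..} f < \<infinity> \<longrightarrow> (\<forall>k. k \<notin> {0..b} \<longrightarrow> f k = 0) \<longrightarrow>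
           L2_sq {0..} (Phi_adj \<beta> f) \<le> ennreal (C\<^sup>2) * L2_sq \<Omega> (Phi_adj \<beta> f)"
    by blast
  define \<delta> where "\<delta> = 1 / (4 * (\<bar>\<beta>\<bar> + b))"
  define X where "X = max (max 1 \<delta>) (8 * (2 * \<bar>\<beta>\<bar> + b + 2) / b\<^sup>2)"
  have "0 < \<bar>\<beta>\<bar> + b"
    using assms(1) by simp
  then have \<delta>: "0 < \<delta>" "\<delta> * (\<bar>\<beta>\<bar> + b) \<le> 1 / 4"
    by (simp_all add: \<delta>_def field_simps)
  show ?thesis
  proof (rule thick_if_observable_family[where h = "\<lambda>x0. Phi_adj \<beta> (probe \<beta> b x0)" and c = "C\<^sup>2" and X = X
        and m = "(sqrt (2 / pi) * b\<^sup>2 / 16)\<^sup>2 * (2 * \<delta>)" and M = "b * (\<bar>\<beta>\<bar> + b)"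
        and K = "2 * \<bar>\<beta>\<bar> + b + 2"])
    fix x0 x
    assume "X \<le> x0"
    then have x0: "1 \<le> x0" "\<delta> \<le> x0" "8 * (2 * \<bar>\<beta>\<bar> + b + 2) \<le> b\<^sup>2 * x0"
      using assms(1) by (auto simp: X_def pos_divide_le_eq mult.commute)
    show "L2_sq {0..} (Phi_adj \<beta> (probe \<beta> b x0)) \<le> ennreal (C\<^sup>2) * L2_sq \<Omega> (Phi_adj \<beta> (probe \<beta> b x0))"
      using observable probe_measurable probe_eq_0 L2_sq_probe_finite[of b \<beta> x0] assms(1) by simp
    show "ennreal ((sqrt (2 / pi) * b\<^sup>2 / 16)\<^sup>2 * (2 * \<delta>)) \<le> L2_sq {0..} (Phi_adj \<beta> (probe \<beta> b x0))"
      using assms(1) \<delta> x0(2,1,3) by (rule L2_sq_Phi_adj_probe_ge)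
    show "cmod (Phi_adj \<beta> (probe \<beta> b x0) x) \<le> b * (\<bar>\<beta>\<bar> + b)"
      using assms(1) by (simp add: norm_Phi_adj_probe_le)
    show "cmod (Phi_adj \<beta> (probe \<beta> b x0) x) \<le> (2 * \<bar>\<beta>\<bar> + b + 2) / \<bar>x - x0\<bar>"
      if "0 \<le> x" "1 \<le> \<bar>x - x0\<bar>"
      using assms(1) x0(1) that by (intro norm_Phi_adj_probe_decay) auto
  qed (use assms \<delta> in auto)
qed

end
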